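(* Let $v$ be the last installed view in the system. Then view $v$ will eventually be changed (i.e., $v.succ$ will eventually be installed).
   Context: System: servers $S=\{s_1,\dots,s_n\}$; reliable links, message passing; asynchronous; crash failures only (a server is correct if it does not crash); at most $f$ servers crash and $2f+1\le n$. Views form a sequence $v_0,v_1,\dots$ with $v_{k+1}=v_k.succ$; $v<w$ means $w$ is obtained from $v$ by applying $succ$ one or more times. Each server $s$ has a current view $s.cview$ (initially $v_0$), a local timeout per view, and a weight in each view; in every view each server's weight is strictly between $\mathbb{wl}=n/(2(n-f))$ and $\mathbb{wu}=n/(2f)$ and the total weight is at most $n$. A weighted majority for view $v$ is a set of servers whose weights in $v$ sum to more than $n/2$. View changer run by each server $s$ with $s.cview=v$: when its local timeout for $v$ expires it sends $\langle\text{change\_view},v.succ\rangle$ to all servers; once it has received or sent change\_view for $v.succ$ it forwards it if not already sent, disables read/write operations, sends $\langle\text{state\_update},(val,ts,cid),v,w\rangle$ to all servers — at this point it has uninstalled $v$ — waits until it has state\_update messages for view $v$ whose weights sum to more than $n/2$, adopts the value with lexicographically largest $(ts,cid)$, then sets $s.cview\leftarrow v.succ$ (installs $v.succ$), sets a new timeout and re-enables read/write operations. A view $v$ is installed in the system once at least one server installs $v$ and every server $s$ satisfies $s.cview\le v$. *)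

theory Defs
  imports Complex_Main "HOL-Library.Product_Lexorder" "HOL-Library.Cardinality"
begin

text \<open>
  Views v_0, v_1, ... are represented by natural numbers
  (v_k is k, succ is Suc, and the order on views is the order on nat).
  Servers form a finite type 's, so n = CARD('s).
  A server's replica state is a triple (val, ts, cid).
\<close>

type_synonym ('v, 'c) rstate = "'v \<times> nat \<times> 'c"

definition tskey :: "('v, 'c) rstate \<Rightarrow> nat \<times> 'c" where
  "tskey x = snd x"

datatype phase = Normal | Changing

text \<open>Global state. Links are modelled by the set of sent (broadcast) messages together
  with, for each server, the set of messages it has received so far.\<close>
record ('s, 'v, 'c) gstate =
  cview   :: "'s \<Rightarrow> nat"
  phase   :: "'s \<Rightarrow> phase"                        \<comment> \<open>Normal: ops enabled; Changing: v uninstalled\<close>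
  rst     :: "'s \<Rightarrow> ('v, 'c) rstate"
  crashed :: "'s set"
  sent_cv :: "('s \<times> nat) set"                      \<comment> \<open>change_view(w) sent by s to all\<close>
  sent_su :: "('s \<times> ('v, 'c) rstate \<times> nat) set"   \<comment> \<open>state_update(x, v) sent by s to all\<close>
  recv_cv :: "'s \<Rightarrow> ('s \<times> nat) set"
  recv_su :: "'s \<Rightarrow> ('s \<times> ('v, 'c) rstate \<times> nat) set"

datatype ('s, 'v, 'c) action =
    Timeout 's                                 \<comment> \<open>local timeout of s for its current view expires\<close>
  | DeliverCV 's "'s \<times> nat"
  | DeliverSU 's "'s \<times> ('v, 'c) rstate \<times> nat"
  | StartChange 's
  | Install 's
  | Op 's "('v, 'c) rstate"
  | Crash 's
  | Stutter

definition init_state :: "('s, 'v, 'c) gstate \<Rightarrow> bool" where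
  "init_state g \<longleftrightarrow> (\<forall>s. cview g s = 0) \<and> (\<forall>s. phase g s = Normal) \<and> crashed g = {}
     \<and> sent_cv g = {} \<and> sent_su g = {} \<and> (\<forall>s. recv_cv g s = {}) \<and> (\<forall>s. recv_su g s = {})"

definition su_senders :: "('s, 'v, 'c) gstate \<Rightarrow> 's \<Rightarrow> nat \<Rightarrow> 's set" where
  "su_senders g s v = {r. \<exists>x. (r, x, v) \<in> recv_su g s}"

definition weighted_majority :: "(nat \<Rightarrow> 's::finite \<Rightarrow> real) \<Rightarrow> nat \<Rightarrow> 's set \<Rightarrow> bool" where
  "weighted_majority weight v Q \<longleftrightarrow> (\<Sum>r\<in>Q. weight v r) > real CARD('s) / 2"

fun step :: "(nat \<Rightarrow> 's::finite \<Rightarrow> real) \<Rightarrow> ('s, 'v, 'c::linorder) action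
               \<Rightarrow> ('s, 'v, 'c) gstate \<Rightarrow> ('s, 'v, 'c) gstate \<Rightarrow> bool" where
  "step weight (Timeout s) g g' \<longleftrightarrow>
     s \<notin> crashed g \<and> phase g s = Normal \<and>
     g' = g\<lparr>sent_cv := insert (s, Suc (cview g s)) (sent_cv g)\<rparr>"
| "step weight (DeliverCV s m) g g' \<longleftrightarrow>
     s \<notin> crashed g \<and> m \<in> sent_cv g \<and> m \<notin> recv_cv g s \<and>
     g' = g\<lparr>recv_cv := (recv_cv g)(s := insert m (recv_cv g s))\<rparr>"
| "step weight (DeliverSU s m) g g' \<longleftrightarrow>
     s \<notin> crashed g \<and> m \<in> sent_su g \<and> m \<notin> recv_su g s \<and>
     g' = g\<lparr>recv_su := (recv_su g)(s := insert m (recv_su g s))\<rparr>"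
| "step weight (StartChange s) g g' \<longleftrightarrow>
     s \<notin> crashed g \<and> phase g s = Normal \<and>
     ((\<exists>r. (r, Suc (cview g s)) \<in> recv_cv g s) \<or> (s, Suc (cview g s)) \<in> sent_cv g) \<and>
     g' = g\<lparr>sent_cv := insert (s, Suc (cview g s)) (sent_cv g),
            phase := (phase g)(s := Changing),
            sent_su := insert (s, rst g s, cview g s) (sent_su g)\<rparr>"
| "step weight (Install s) g g' \<longleftrightarrow>
     s \<notin> crashed g \<and> phase g s = Changing \<and>
     weighted_majority weight (cview g s) (su_senders g s (cview g s)) \<and>
     (\<exists>r x. (r, x, cview g s) \<in> recv_su g s \<and>
        (\<forall>r' y. (r', y, cview g s) \<in> recv_su g s \<longrightarrow> tskey y \<le> tskey x) \<and>
        g' = g\<lparr>rst := (rst g)(s := x),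
               cview := (cview g)(s := Suc (cview g s)),
               phase := (phase g)(s := Normal)\<rparr>)"
| "step weight (Op s x) g g' \<longleftrightarrow>
     s \<notin> crashed g \<and> phase g s = Normal \<and> g' = g\<lparr>rst := (rst g)(s := x)\<rparr>"
| "step weight (Crash s) g g' \<longleftrightarrow>
     s \<notin> crashed g \<and> g' = g\<lparr>crashed := insert s (crashed g)\<rparr>"
| "step weight Stutter g g' \<longleftrightarrow> g' = g"

definition enabled :: "(nat \<Rightarrow> 's::finite \<Rightarrow> real) \<Rightarrow> ('s, 'v, 'c::linorder) action
                         \<Rightarrow> ('s, 'v, 'c) gstate \<Rightarrow> bool" where
  "enabled weight a g \<longleftrightarrow> (\<exists>g'. step weight a g g')"

text \<open>Actions of the view-changer / link layer performed by a server (subject to fairness).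
  Operations, crashes and stuttering are not required to happen.\<close>
fun fair_owner :: "('s, 'v, 'c) action \<Rightarrow> 's option" where
  "fair_owner (Timeout s) = Some s"
| "fair_owner (DeliverCV s m) = Some s"
| "fair_owner (DeliverSU s m) = Some s"
| "fair_owner (StartChange s) = Some s"
| "fair_owner (Install s) = Some s"
| "fair_owner (Op s x) = None"
| "fair_owner (Crash s) = None"
| "fair_owner Stutter = None"

definition correct :: "(nat \<Rightarrow> ('s, 'v, 'c) gstate) \<Rightarrow> 's \<Rightarrow> bool" where
  "correct \<sigma> s \<longleftrightarrow> (\<forall>i. s \<notin> crashed (\<sigma> i))"

text \<open>An admissible execution: starts in an initial state, every transition is a protocol step,
  at most f servers crash, and weak fairness holds for every action of a correct server
  (for delivery actions this is exactly reliability of the links; for Timeout it says that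
  the local timeout of a correct server that stays in a view eventually expires).\<close>
definition execution :: "(nat \<Rightarrow> 's::finite \<Rightarrow> real) \<Rightarrow> nat
      \<Rightarrow> (nat \<Rightarrow> ('s, 'v, 'c::linorder) gstate) \<Rightarrow> (nat \<Rightarrow> ('s, 'v, 'c) action) \<Rightarrow> bool" where
  "execution weight f \<sigma> lab \<longleftrightarrow>
     init_state (\<sigma> 0) \<and>
     (\<forall>i. step weight (lab i) (\<sigma> i) (\<sigma> (Suc i))) \<and>
     (\<forall>i. card (crashed (\<sigma> i)) \<le> f) \<and>
     (\<forall>a s i. fair_owner a = Some s \<longrightarrow> correct \<sigma> s \<longrightarrow>
        (\<forall>j\<ge>i. enabled weight a (\<sigma> j)) \<longrightarrow> (\<exists>j\<ge>i. lab j = a))"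

definition installed_in_system :: "('s, 'v, 'c) gstate \<Rightarrow> nat \<Rightarrow> bool" where
  "installed_in_system g v \<longleftrightarrow> (\<exists>s. cview g s = v) \<and> (\<forall>s. cview g s \<le> v)"

text \<open>Weight constraints: wl < weight < wu with wl = n/(2(n-f)), wu = n/(2f),
  stated multiplied out (for f = 0, wu is read as +infinity); total weight at most n.\<close>
definition weights_ok :: "(nat \<Rightarrow> 's::finite \<Rightarrow> real) \<Rightarrow> nat \<Rightarrow> bool" where
  "weights_ok weight f \<longleftrightarrow>
     (\<forall>v s. real CARD('s) < 2 * (real CARD('s) - real f) * weight v s \<and>
            2 * real f * weight v s < real CARD('s)) \<and>
     (\<forall>v. (\<Sum>s\<in>UNIV. weight v s) \<le> real CARD('s))"

end

(*
  Suppose v.succ is never installed. Since views grow by at most one per step, no server ever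
  gets past v, so the view of every correct server eventually stops changing; by fairness its
  timeout then fires and it enters the change phase for good. It cannot stop in a view w < v:
  some server has already installed v, and a server only leaves view w after hearing from a
  weighted majority, so a weighted majority has sent state_update for w; once these messages
  are delivered, Install is enabled forever. Hence every
  correct server ends up changing from view v, having sent state_update for v. At least n - f
  servers are correct and each weighs more than n/(2(n - f)), so they form a weighted majority
  for v, and the same fairness argument forces one of them to install v.succ.
*)
theory Submission
  imports Defs
begin

lemma
  assumes "step weight a g g'"
  shows step_sent_su_mono: "sent_su g \<subseteq> sent_su g'"
    and step_recv_su_mono: "recv_su g s \<subseteq> recv_su g' s"
    and step_sent_cv_mono: "sent_cv g \<subseteq> sent_cv g'"
    and step_crashed_mono: "crashed g \<subseteq> crashed g'"
    and step_cview_mono: "cview g s \<le> cview g' s"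
    and step_cview_le_Suc: "cview g' s \<le> Suc (cview g s)"
  using assms by (cases a; auto)+

lemma step_keeps_Changing:
  assumes "step weight a g g'" "phase g s = Changing" "cview g' s = cview g s"
  shows "phase g' s = Changing"
  using assms by (cases a) auto

lemma weighted_majority_mono:
  assumes "weighted_majority weight w Q" "Q \<subseteq> Q'" "\<And>r. 0 \<le> weight w r"
  shows "weighted_majority weight w Q'"
proof -
  have "(\<Sum>r\<in>Q. weight w r) \<le> (\<Sum>r\<in>Q'. weight w r)"
    using assms(2,3) by (intro sum_mono2) auto
  then show ?thesis
    using assms(1) unfolding weighted_majority_def by linarith
qed

lemma weighted_majority_nonempty: "weighted_majority weight w Q \<Longrightarrow> Q \<noteq> {}"
  unfolding weighted_majority_def by auto

lemma weights_ok_pos: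
  fixes weight :: "nat \<Rightarrow> 's::finite \<Rightarrow> real"
  assumes "weights_ok weight f" "f < CARD('s)"
  shows "0 < weight w r"
proof -
  have "real CARD('s) < 2 * (real CARD('s) - real f) * weight w r"
    using assms(1) unfolding weights_ok_def by blast
  then have "0 < 2 * (real CARD('s) - real f) * weight w r"
    using of_nat_0_le_iff[of "CARD('s)"] by linarith
  moreover have "0 < 2 * (real CARD('s) - real f)"
    using assms(2) by simp
  ultimately show ?thesis
    by (simp add: zero_less_mult_iff)
qed

lemma weighted_majority_if_card_compl_le:
  fixes weight :: "nat \<Rightarrow> 's::finite \<Rightarrow> real"
  assumes "weights_ok weight f" "f < CARD('s)" "card (- C) \<le> f"
  shows "weighted_majority weight w C"
proof -
  let ?n = "real CARD('s)" and ?m = "real CARD('s) - real f"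
  have "card C + card (- C) = CARD('s)"
    using card_Un_disjoint[of C "- C"] by (simp add: Compl_partition)
  then have card_C: "?m \<le> real (card C)"
    using assms(3) by linarith
  have m_pos: "0 < ?m"
    using assms(2) by simp
  then have "C \<noteq> {}"
    using card_C by auto
  then have "(\<Sum>r\<in>C. ?n) < (\<Sum>r\<in>C. 2 * ?m * weight w r)"
    using assms(1) unfolding weights_ok_def by (intro sum_strict_mono) auto
  then have "real (card C) * ?n < 2 * ?m * (\<Sum>r\<in>C. weight w r)"
    by (simp add: sum_distrib_left)
  moreover have "?m * ?n \<le> real (card C) * ?n"
    using card_C by (intro mult_right_mono) auto
  ultimately have "?m * ?n < ?m * (2 * (\<Sum>r\<in>C. weight w r))"
    by (simp add: algebra_simps)
  then show ?thesis
    using m_pos unfolding weighted_majority_def by simp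
qed

definition sent_su_senders :: "('s, 'v, 'c) gstate \<Rightarrow> nat \<Rightarrow> 's set" where
  "sent_su_senders g w = {r. \<exists>x. (r, x, w) \<in> sent_su g}"

definition view_change_inv :: "(nat \<Rightarrow> 's::finite \<Rightarrow> real) \<Rightarrow> ('s, 'v, 'c) gstate \<Rightarrow> bool" where
  "view_change_inv weight g \<longleftrightarrow>
     finite (sent_su g) \<and> (\<forall>s. recv_su g s \<subseteq> sent_su g) \<and>
     (\<forall>s. phase g s = Changing \<longrightarrow> s \<in> sent_su_senders g (cview g s)) \<and>
     (\<forall>s w. w < cview g s \<longrightarrow> weighted_majority weight w (sent_su_senders g w))"

lemma init_view_change_inv: "init_state g \<Longrightarrow> view_change_inv weight g"
  unfolding init_state_def view_change_inv_def by auto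

lemma su_senders_subset_sent:
  "view_change_inv weight g \<Longrightarrow> su_senders g s w \<subseteq> sent_su_senders g w"
  unfolding view_change_inv_def su_senders_def sent_su_senders_def by blast

lemma step_view_change_inv:
  assumes st: "step weight a g g'" and inv: "view_change_inv weight g"
    and nonneg: "\<And>w r. 0 \<le> weight w r"
  shows "view_change_inv weight g'"
proof -
  have majority_kept: "weighted_majority weight w (sent_su_senders g' w)"
    if "weighted_majority weight w (sent_su_senders g w)" for w
    using that step_sent_su_mono[OF st] nonneg
    by (elim weighted_majority_mono) (auto simp: sent_su_senders_def)
  show ?thesis
  proof (cases a)
    case (Install t)
    from st Install obtain x where wm: "weighted_majority weight (cview g t) (su_senders g t (cview g t))"
      and g': "g' = g\<lparr>rst := (rst g)(t := x), cview := (cview g)(t := Suc (cview g t)),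
                        phase := (phase g)(t := Normal)\<rparr>"
      by auto
    have "weighted_majority weight (cview g t) (sent_su_senders g (cview g t))"
      using wm su_senders_subset_sent[OF inv] nonneg by (rule weighted_majority_mono)
    then show ?thesis
      using inv unfolding view_change_inv_def g' by (auto simp: sent_su_senders_def less_Suc_eq)
  next
    case (StartChange t)
    then show ?thesis
      using st inv majority_kept unfolding view_change_inv_def
      by (auto simp: sent_su_senders_def simp del: split_paired_Ex)
  qed (use st inv in \<open>auto simp: view_change_inv_def sent_su_senders_def\<close>)
qed

lemma finite_ex_max_key:
  fixes key :: "'a \<Rightarrow> 'b::linorder"
  assumes "finite S" "S \<noteq> {}"
  shows "\<exists>x\<in>S. \<forall>y\<in>S. key y \<le> key x"
proof -
  have "Max (key ` S) \<in> key ` S"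
    using assms by simp
  then obtain x where "x \<in> S" "key x = Max (key ` S)"
    by auto
  moreover have "key y \<le> Max (key ` S)" if "y \<in> S" for y
    using assms(1) that by simp
  ultimately show ?thesis
    by metis
qed

lemma Install_enabled:
  assumes "s \<notin> crashed g" "phase g s = Changing" "finite (recv_su g s)"
    and "weighted_majority weight (cview g s) (su_senders g s (cview g s))"
  shows "enabled weight (Install s) g"
proof -
  let ?M = "{m \<in> recv_su g s. snd (snd m) = cview g s}"
  have "?M \<noteq> {}"
    using weighted_majority_nonempty[OF assms(4)] unfolding su_senders_def by auto
  then obtain r x where latest: "(r, x, cview g s) \<in> recv_su g s"
    "\<forall>m\<in>?M. tskey (fst (snd m)) \<le> tskey x"
    using finite_ex_max_key[of ?M "\<lambda>m. tskey (fst (snd m))"] assms(3) by force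
  have "\<forall>r' y. (r', y, cview g s) \<in> recv_su g s \<longrightarrow> tskey y \<le> tskey x"
    using latest(2) by force
  then have "step weight (Install s) g (g\<lparr>rst := (rst g)(s := x),
      cview := (cview g)(s := Suc (cview g s)), phase := (phase g)(s := Normal)\<rparr>)"
    using assms latest(1) unfolding step.simps by blast
  then show ?thesis
    unfolding enabled_def by blast
qed

lemma DeliverSU_enabled:
  "s \<notin> crashed g \<Longrightarrow> m \<in> sent_su g \<Longrightarrow> m \<notin> recv_su g s \<Longrightarrow> enabled weight (DeliverSU s m) g"
  unfolding enabled_def by (rule exI) simp

lemma Timeout_enabled:
  "s \<notin> crashed g \<Longrightarrow> phase g s = Normal \<Longrightarrow> enabled weight (Timeout s) g"
  unfolding enabled_def by (rule exI) simp

lemma StartChange_enabled: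
  "s \<notin> crashed g \<Longrightarrow> phase g s = Normal \<Longrightarrow> (s, Suc (cview g s)) \<in> sent_cv g
    \<Longrightarrow> enabled weight (StartChange s) g"
  unfolding enabled_def by (rule exI) simp

lemma mono_bounded_eventually_const:
  fixes h :: "nat \<Rightarrow> nat"
  assumes "mono h" "\<forall>j\<ge>i. h j \<le> b"
  shows "\<exists>k\<ge>i. \<forall>j\<ge>k. h j = h k"
proof -
  have "h ` {i..} \<subseteq> {..b}"
    using assms(2) by auto
  then have "finite (h ` {i..})"
    by (rule finite_subset) simp
  then obtain k where k: "k \<ge> i" "\<forall>j\<ge>i. h j \<le> h k"
    using finite_ex_max_key[of "h ` {i..}" id] by auto
  have "h j = h k" if "k \<le> j" for j
    using k that monoD[OF assms(1) that] by (simp add: order_antisym)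
  with k(1) show ?thesis
    by blast
qed

locale view_change_execution =
  fixes weight :: "nat \<Rightarrow> 's::finite \<Rightarrow> real"
    and f :: nat
    and \<sigma> :: "nat \<Rightarrow> ('s, 'v, 'c::linorder) gstate"
    and lab :: "nat \<Rightarrow> ('s, 'v, 'c) action"
  assumes execution: "execution weight f \<sigma> lab"
    and weights: "weights_ok weight f"
    and faults_lt_card: "f < CARD('s)"
begin

lemma
  shows initial: "init_state (\<sigma> 0)"
    and transition: "step weight (lab j) (\<sigma> j) (\<sigma> (Suc j))"
    and card_crashed_le: "card (crashed (\<sigma> j)) \<le> f"
    and fairness: "fair_owner a = Some s \<Longrightarrow> correct \<sigma> s \<Longrightarrow> \<forall>j\<ge>k. enabled weight a (\<sigma> j)
      \<Longrightarrow> \<exists>j\<ge>k. lab j = a"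
  using execution unfolding execution_def by simp_all

lemma weight_nonneg: "0 \<le> weight w r"
  using weights_ok_pos[OF weights faults_lt_card] by (rule less_imp_le)

lemma invariant: "view_change_inv weight (\<sigma> j)"
proof (induction j)
  case 0
  show ?case
    using initial by (rule init_view_change_inv)
next
  case (Suc j)
  show ?case
    by (rule step_view_change_inv[OF transition Suc.IH weight_nonneg])
qed

lemma Changing_sent_su: "phase (\<sigma> j) s = Changing \<Longrightarrow> s \<in> sent_su_senders (\<sigma> j) (cview (\<sigma> j) s)"
  using invariant[of j] unfolding view_change_inv_def by blast

lemma sent_su_mono: "j \<le> k \<Longrightarrow> sent_su (\<sigma> j) \<subseteq> sent_su (\<sigma> k)"
  by (rule lift_Suc_mono_le[of "\<lambda>j. sent_su (\<sigma> j)", OF step_sent_su_mono[OF transition]])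

lemma recv_su_mono: "j \<le> k \<Longrightarrow> recv_su (\<sigma> j) s \<subseteq> recv_su (\<sigma> k) s"
  by (rule lift_Suc_mono_le[of "\<lambda>j. recv_su (\<sigma> j) s", OF step_recv_su_mono[OF transition]])

lemma sent_cv_mono: "j \<le> k \<Longrightarrow> sent_cv (\<sigma> j) \<subseteq> sent_cv (\<sigma> k)"
  by (rule lift_Suc_mono_le[of "\<lambda>j. sent_cv (\<sigma> j)", OF step_sent_cv_mono[OF transition]])

lemma crashed_mono: "j \<le> k \<Longrightarrow> crashed (\<sigma> j) \<subseteq> crashed (\<sigma> k)"
  by (rule lift_Suc_mono_le[of "\<lambda>j. crashed (\<sigma> j)", OF step_crashed_mono[OF transition]])

lemma cview_mono: "mono (\<lambda>j. cview (\<sigma> j) s)"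
  by (intro incseq_SucI step_cview_mono[OF transition])

lemma correct_not_crashed: "correct \<sigma> s \<Longrightarrow> s \<notin> crashed (\<sigma> j)"
  unfolding correct_def by blast

lemma card_faulty_le: "card {s. \<not> correct \<sigma> s} \<le> f"
proof -
  have "\<forall>\<^sub>F j in sequentially. s \<in> crashed (\<sigma> j)" if "\<not> correct \<sigma> s" for s
    using that crashed_mono unfolding correct_def eventually_sequentially by blast
  then have "\<forall>\<^sub>F j in sequentially. \<forall>s\<in>{s. \<not> correct \<sigma> s}. s \<in> crashed (\<sigma> j)"
    by (intro eventually_ball_finite) auto
  then obtain j where "{s. \<not> correct \<sigma> s} \<subseteq> crashed (\<sigma> j)"
    unfolding eventually_sequentially by blast
  then show ?thesis
    using card_mono[OF finite] card_crashed_le[of j] by (meson le_trans)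
qed

lemma weighted_majority_correct: "weighted_majority weight w {s. correct \<sigma> s}"
proof -
  have "card (- {s. correct \<sigma> s}) \<le> f"
    using card_faulty_le by (simp add: Compl_eq)
  then show ?thesis
    by (rule weighted_majority_if_card_compl_le[OF weights faults_lt_card])
qed

lemma eventually_received:
  assumes "correct \<sigma> s" "m \<in> sent_su (\<sigma> k)"
  shows "\<forall>\<^sub>F j in sequentially. m \<in> recv_su (\<sigma> j) s"
proof -
  have "\<exists>j. m \<in> recv_su (\<sigma> j) s"
  proof (rule ccontr)
    assume never: "\<nexists>j. m \<in> recv_su (\<sigma> j) s"
    have "enabled weight (DeliverSU s m) (\<sigma> j)" if "k \<le> j" for j
    proof (rule DeliverSU_enabled)
      show "s \<notin> crashed (\<sigma> j)"
        using assms(1) by (rule correct_not_crashed)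
      show "m \<in> sent_su (\<sigma> j)"
        using assms(2) sent_su_mono[OF that] by blast
      show "m \<notin> recv_su (\<sigma> j) s"
        using never by blast
    qed
    then obtain j where "lab j = DeliverSU s m"
      using fairness[of "DeliverSU s m" s k] assms(1) by auto
    then have "m \<in> recv_su (\<sigma> (Suc j)) s"
      using transition[of j] by auto
    with never show False
      by blast
  qed
  then obtain j where "m \<in> recv_su (\<sigma> j) s" ..
  then have "\<forall>i\<ge>j. m \<in> recv_su (\<sigma> i) s"
    using recv_su_mono by blast
  then show ?thesis
    unfolding eventually_sequentially by blast
qed

lemma eventually_received_all:
  assumes "correct \<sigma> s"
  shows "\<forall>\<^sub>F j in sequentially. (\<Union>k. sent_su_senders (\<sigma> k) w) \<subseteq> su_senders (\<sigma> j) s w"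
proof -
  have "\<forall>\<^sub>F j in sequentially. r \<in> su_senders (\<sigma> j) s w"
    if "r \<in> (\<Union>k. sent_su_senders (\<sigma> k) w)" for r
  proof -
    from that obtain k x where "(r, x, w) \<in> sent_su (\<sigma> k)"
      unfolding sent_su_senders_def by blast
    from eventually_received[OF assms this] show ?thesis
      by (rule eventually_mono) (unfold su_senders_def, blast)
  qed
  then have "\<forall>\<^sub>F j in sequentially. \<forall>r\<in>(\<Union>k. sent_su_senders (\<sigma> k) w). r \<in> su_senders (\<sigma> j) s w"
    by (intro eventually_ball_finite) auto
  then show ?thesis
    by (rule eventually_mono) blast
qed

lemma stuck_changing_no_majority:
  assumes "correct \<sigma> s" "\<forall>j\<ge>k. cview (\<sigma> j) s = w \<and> phase (\<sigma> j) s = Changing"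
  shows "\<not> weighted_majority weight w (\<Union>j. sent_su_senders (\<sigma> j) w)"
proof
  assume majority: "weighted_majority weight w (\<Union>j. sent_su_senders (\<sigma> j) w)"
  have "\<forall>\<^sub>F j in sequentially. enabled weight (Install s) (\<sigma> j)"
    using eventually_received_all[OF assms(1), of w] eventually_ge_at_top[of k]
  proof eventually_elim
    case (elim j)
    have "finite (recv_su (\<sigma> j) s)"
      using invariant[of j] unfolding view_change_inv_def by (meson finite_subset)
    moreover have "weighted_majority weight w (su_senders (\<sigma> j) s w)"
      using majority elim(1) weight_nonneg by (rule weighted_majority_mono)
    moreover have "cview (\<sigma> j) s = w" "phase (\<sigma> j) s = Changing"
      using assms(2) elim(2) by auto
    ultimately show ?case
      using correct_not_crashed[OF assms(1)] by (auto intro: Install_enabled)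
  qed
  then obtain T where "\<forall>j\<ge>T. enabled weight (Install s) (\<sigma> j)"
    unfolding eventually_sequentially by blast
  then obtain j where j: "j \<ge> max T k" "lab j = Install s"
    using fairness[of "Install s" s "max T k"] assms(1) by auto
  then have "cview (\<sigma> (Suc j)) s = Suc (cview (\<sigma> j) s)"
    using transition[of j] by auto
  moreover have "cview (\<sigma> (Suc j)) s = cview (\<sigma> j) s"
    using assms(2) j(1) by simp
  ultimately show False
    by simp
qed

lemma Changing_persists:
  assumes "\<forall>j\<ge>k. cview (\<sigma> j) s = w" "phase (\<sigma> k) s = Changing" "k \<le> n"
  shows "phase (\<sigma> n) s = Changing"
  using assms(3)
proof (induction n rule: dec_induct)
  case base
  show ?case
    using assms(2) .
next
  case (step n)
  have "cview (\<sigma> (Suc n)) s = cview (\<sigma> n) s"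
    using assms(1) step.hyps(1) by simp
  with step.IH show ?case
    by (rule step_keeps_Changing[OF transition])
qed

lemma eventually_Changing:
  assumes "correct \<sigma> s" "\<forall>j\<ge>k. cview (\<sigma> j) s = w"
  shows "\<exists>k'\<ge>k. \<forall>j\<ge>k'. phase (\<sigma> j) s = Changing"
proof (rule ccontr)
  assume not_changing: "\<not> ?thesis"
  have normal: "phase (\<sigma> j) s = Normal" if "k \<le> j" for j
  proof (rule ccontr)
    assume "phase (\<sigma> j) s \<noteq> Normal"
    then have "phase (\<sigma> j) s = Changing"
      by (cases "phase (\<sigma> j) s") auto
    moreover have "\<forall>i\<ge>j. cview (\<sigma> i) s = w"
      using assms(2) that by simp
    ultimately have "\<forall>i\<ge>j. phase (\<sigma> i) s = Changing"
      using Changing_persists by blast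
    with that not_changing show False
      by blast
  qed
  have "enabled weight (Timeout s) (\<sigma> j)" if "k \<le> j" for j
    using correct_not_crashed[OF assms(1)] normal[OF that] by (rule Timeout_enabled)
  then obtain j1 where j1: "k \<le> j1" "lab j1 = Timeout s"
    using fairness[of "Timeout s" s k] assms(1) by auto
  then have sent: "(s, Suc w) \<in> sent_cv (\<sigma> (Suc j1))"
    using transition[of j1] assms(2) by auto
  have "enabled weight (StartChange s) (\<sigma> j)" if "Suc j1 \<le> j" for j
  proof (rule StartChange_enabled)
    show "s \<notin> crashed (\<sigma> j)"
      using assms(1) by (rule correct_not_crashed)
    show "phase (\<sigma> j) s = Normal"
      using normal that j1(1) by simp
    show "(s, Suc (cview (\<sigma> j) s)) \<in> sent_cv (\<sigma> j)"
      using sent sent_cv_mono[OF that] assms(2) that j1(1) by auto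
  qed
  then obtain j2 where "Suc j1 \<le> j2" "lab j2 = StartChange s"
    using fairness[of "StartChange s" s "Suc j1"] assms(1) by auto
  then have "phase (\<sigma> (Suc j2)) s = Changing"
    using transition[of j2] by auto
  with normal \<open>Suc j1 \<le> j2\<close> j1(1) show False
    by simp
qed

lemma views_bounded_until_succ_installed:
  assumes "installed_in_system (\<sigma> i) v" "\<forall>j\<ge>i. \<not> installed_in_system (\<sigma> j) (Suc v)" "i \<le> n"
  shows "cview (\<sigma> n) s \<le> v"
  using assms(3)
proof (induction n arbitrary: s rule: dec_induct)
  case base
  show ?case
    using assms(1) unfolding installed_in_system_def by blast
next
  case (step n)
  have "cview (\<sigma> (Suc n)) s' \<le> Suc v" for s'
    using step.IH[of s'] step_cview_le_Suc[OF transition, of n s'] by linarith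
  moreover have "\<not> installed_in_system (\<sigma> (Suc n)) (Suc v)"
    using assms(2) step.hyps(1) by simp
  ultimately have "cview (\<sigma> (Suc n)) s \<noteq> Suc v"
    unfolding installed_in_system_def by blast
  then show ?case
    using step.IH[of s] step_cview_le_Suc[OF transition, of n s] by linarith
qed

lemma correct_settles_Changing_in_top_view:
  assumes bounded: "\<forall>j\<ge>i. \<forall>s. cview (\<sigma> j) s \<le> v" and top: "cview (\<sigma> i) s0 = v"
    and correct: "correct \<sigma> s"
  shows "\<exists>k. \<forall>j\<ge>k. cview (\<sigma> j) s = v \<and> phase (\<sigma> j) s = Changing"
proof -
  obtain k w where k: "k \<ge> i" and settled: "\<forall>j\<ge>k. cview (\<sigma> j) s = w"
    using mono_bounded_eventually_const[OF cview_mono[of s], of i v] bounded by blast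
  obtain k' where "k' \<ge> k" "\<forall>j\<ge>k'. phase (\<sigma> j) s = Changing"
    using eventually_Changing[OF correct settled] by blast
  with settled have stuck: "\<forall>j\<ge>k'. cview (\<sigma> j) s = w \<and> phase (\<sigma> j) s = Changing"
    by simp
  have "w \<le> v"
    using bounded settled k by force
  moreover have "\<not> w < v"
  proof
    assume "w < v"
    then have "weighted_majority weight w (sent_su_senders (\<sigma> i) w)"
      using invariant[of i] top unfolding view_change_inv_def by auto
    then have "weighted_majority weight w (\<Union>j. sent_su_senders (\<sigma> j) w)"
      using weight_nonneg by (rule weighted_majority_mono[OF _ UN_upper[OF UNIV_I]])
    with stuck_changing_no_majority[OF correct stuck] show False ..
  qed
  ultimately show ?thesis
    using stuck by auto
qed

end

theorem lemma6:
  fixes weight :: "nat \<Rightarrow> 's::finite \<Rightarrow> real"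
    and f :: nat
    and \<sigma> :: "nat \<Rightarrow> ('s, 'v, 'c::linorder) gstate"
    and lab :: "nat \<Rightarrow> ('s, 'v, 'c) action"
  assumes "2 * f + 1 \<le> CARD('s)"
    and "weights_ok weight f"
    and "execution weight f \<sigma> lab"
    and "installed_in_system (\<sigma> i) v"
  shows "\<exists>j\<ge>i. installed_in_system (\<sigma> j) (Suc v)"
proof (rule ccontr)
  assume never: "\<not> ?thesis"
  interpret view_change_execution weight f \<sigma> lab
    using assms by unfold_locales auto
  have "\<forall>j\<ge>i. \<forall>s. cview (\<sigma> j) s \<le> v"
    using views_bounded_until_succ_installed assms(4) never by blast
  moreover obtain s0 where "cview (\<sigma> i) s0 = v"
    using assms(4) unfolding installed_in_system_def by blast
  ultimately have settles: "\<exists>k. \<forall>j\<ge>k. cview (\<sigma> j) s = v \<and> phase (\<sigma> j) s = Changing"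
    if "correct \<sigma> s" for s
    using correct_settles_Changing_in_top_view that by blast
  then have "{s. correct \<sigma> s} \<subseteq> (\<Union>j. sent_su_senders (\<sigma> j) v)"
    using Changing_sent_su by fastforce
  then have majority: "weighted_majority weight v (\<Union>j. sent_su_senders (\<sigma> j) v)"
    by (rule weighted_majority_mono[OF weighted_majority_correct _ weight_nonneg])
  obtain c where "correct \<sigma> c"
    using weighted_majority_nonempty[OF weighted_majority_correct] by auto
  with settles obtain k where "\<forall>j\<ge>k. cview (\<sigma> j) c = v \<and> phase (\<sigma> j) c = Changing"
    by blast
  with stuck_changing_no_majority majority \<open>correct \<sigma> c\<close> show False
    by blast
qed

end
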